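(* For $n \ge 0$ let $d(n) = \sum_{k \ge 0} w(n-k,k)$ (with $w(m,k)=0$ for $m<0$). Then: (i) $d(n) = c_{ie}(n)$ for all $n \ge 0$; (ii) $\displaystyle\sum_{n \ge 0} d(n) q^n = \frac{1-q^2+q^3}{1 - q - 2 q^2 + 2 q^3}$; (iii) for $n \ge 1$, $d(n) = 2^m - 1$ if $n = 2m-1$, and $d(n) = 3\cdot 2^{m-1} - 1$ if $n = 2m$.
   Context: A composition of $n \ge 0$ is a finite sequence $(c_1,\dots,c_t)$ of positive integers with $c_1+\cdots+c_t=n$; the empty composition is the unique composition of $0$. Let $C_{12}(n)$ be the set of compositions of $n$ all of whose parts lie in $\{1,2\}$. The number of water cells of a composition $(c_1,\dots,c_t)$ is $\sum_{i=1}^{t} \max\bigl(0, \min(\max_{j \le i} c_j, \max_{j \ge i} c_j) - c_i\bigr)$ (the number of unit squares that would hold water poured over its bargraph, in which column $i$ has height $c_i$). For $n,k \ge 0$, $W(n,k)$ is the set of compositions in $C_{12}(n)$ with exactly $k$ water cells and $w(n,k)=|W(n,k)|$. $C_{ie}(n)$ is the set of compositions $(c_1,\dots,c_t)$ of $n$ such that every internal part $c_2,\dots,c_{t-1}$ is even (so all compositions with $t \le 2$ are included, including the empty composition when $n=0$), and $c_{ie}(n)=|C_{ie}(n)|$. *)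

theory Defs
  imports "HOL-Computational_Algebra.Formal_Power_Series"
begin

definition C12 :: "nat \<Rightarrow> nat list set" where
  "C12 n = {cs. sum_list cs = n \<and> set cs \<subseteq> {1, 2}}"

text \<open>Number of water cells: column i holds
  max 0 (min (max of prefix up to i) (max of suffix from i) - c_i).\<close>
definition water :: "nat list \<Rightarrow> nat" where
  "water cs = (\<Sum>i<length cs.
      min (Max (set (take (Suc i) cs))) (Max (set (drop i cs))) - cs ! i)"

definition W :: "nat \<Rightarrow> nat \<Rightarrow> nat list set" where
  "W n k = {cs \<in> C12 n. water cs = k}"

definition w :: "nat \<Rightarrow> nat \<Rightarrow> nat" where
  "w n k = card (W n k)"

text \<open>d(n) = sum over k \<ge> 0 of w(n-k,k); terms with k > n vanish.\<close>
definition d :: "nat \<Rightarrow> nat" where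
  "d n = (\<Sum>k\<le>n. w (n - k) k)"

definition C_ie :: "nat \<Rightarrow> nat list set" where
  "C_ie n = {cs. (\<forall>c\<in>set cs. 0 < c) \<and> sum_list cs = n \<and>
              (\<forall>i. 0 < i \<and> i < length cs - 1 \<longrightarrow> even (cs ! i))}"

definition c_ie :: "nat \<Rightarrow> nat" where
  "c_ie n = card (C_ie n)"

end

theory Submission
  imports Defs
begin

text \<open>For compositions with parts in \<open>{1, 2}\<close>, a part 1 holds one unit of water exactly
  when some 2 lies to its left and some 2 to its right. Splitting off the first part therefore
  gives \<open>d(n + 2) = d(n + 1) + h(n)\<close>, where \<open>h(n)\<close> counts the \<open>{1, 2}\<close>-compositions
  whose size plus number of 1s followed by a later 2 is \<open>n\<close>; prepending a 1 or a 2 shows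
  \<open>h(n + 2) = 2 h(n)\<close>, so \<open>h(n) = 2^\<lfloor>n/2\<rfloor>\<close>. Compositions with even internal parts obey the
  same recurrence: either the first part is 1, followed by a nonempty composition of \<open>n + 1\<close>
  whose parts other than the last are even (again \<open>2^\<lfloor>n/2\<rfloor>\<close> of them), or the first part can
  be lowered by one. The closed forms and the generating function
  \<open>(1 - q)(1 - 2q\<^sup>2) D(q) = (1 - 2q\<^sup>2) + q\<^sup>2 (1 + q)\<close> follow from the recurrence.\<close>

text \<open>The water of \<open>cs\<close> with an extra wall of height \<open>p\<close> to its left. Unlike \<open>water\<close>,
  it obeys a recursion on the first part: the wall absorbs the prefix maximum.\<close>

definition water_from :: "nat \<Rightarrow> nat list \<Rightarrow> nat" where
  "water_from p cs = (\<Sum>i<length cs.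
      min (max p (Max (set (take (Suc i) cs)))) (Max (set (drop i cs))) - cs ! i)"

lemma water_eq_water_from_0: "water cs = water_from 0 cs"
  unfolding water_def water_from_def by simp

lemma water_from_Nil [simp]: "water_from p [] = 0"
  by (simp add: water_from_def)

lemma water_from_Cons:
  "water_from p (x # cs) = (min (max p x) (Max (set (x # cs))) - x) + water_from (max p x) cs"
proof -
  have "Max (set (take (Suc (Suc i)) (x # cs))) = max x (Max (set (take (Suc i) cs)))"
    if "i < length cs" for i
    using that by (cases cs) (auto simp: Max_insert)
  then show ?thesis
    unfolding water_from_def length_Cons sum.lessThan_Suc_shift
    by (auto simp: max.assoc intro!: sum.cong)
qed

fun covered_ones :: "nat list \<Rightarrow> nat" where
  "covered_ones [] = 0"
| "covered_ones (x # cs) = (if x = 1 \<and> 2 \<in> set cs then 1 else 0) + covered_ones cs"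

fun water12 :: "nat list \<Rightarrow> nat" where
  "water12 [] = 0"
| "water12 (x # cs) = (if x = 2 then covered_ones cs else water12 cs)"

lemma Max_set_12:
  assumes "set cs \<subseteq> {1, 2::nat}" "cs \<noteq> []"
  shows "Max (set cs) = (if 2 \<in> set cs then 2 else 1)"
proof (cases "2 \<in> set cs")
  case True
  then show ?thesis using assms by (intro Max_eqI) auto
next
  case False
  then have "set cs = {1}" using assms by (cases cs) auto
  then show ?thesis using False by simp
qed

lemma water_from_2:
  "set cs \<subseteq> {1, 2} \<Longrightarrow> water_from 2 cs = covered_ones cs"
proof (induction cs)
  case (Cons x cs)
  then show ?case
    using Max_set_12[of "x # cs"] by (auto simp: water_from_Cons max_def)
qed simp

lemma water_from_le_1:
  "set cs \<subseteq> {1, 2} \<Longrightarrow> p \<le> 1 \<Longrightarrow> water_from p cs = water12 cs"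
proof (induction cs arbitrary: p)
  case (Cons x cs)
  then show ?case
    using Max_set_12[of "x # cs"] water_from_2[of cs] by (auto simp: water_from_Cons max_def)
qed simp

lemma water_eq_water12: "set cs \<subseteq> {1, 2} \<Longrightarrow> water cs = water12 cs"
  by (simp add: water_eq_water_from_0 water_from_le_1)

lemma finite_compositions_le: "finite {cs :: nat list. (\<forall>c\<in>set cs. 0 < c) \<and> sum_list cs \<le> n}"
proof (rule finite_subset[OF _ finite_lists_length_le[of "{..n}" n]])
  have "length cs \<le> sum_list cs" if "\<forall>c\<in>set cs. 0 < c" for cs :: "nat list"
    using that by (induction cs) (auto simp: Suc_le_eq)
  then show "{cs :: nat list. (\<forall>c\<in>set cs. 0 < c) \<and> sum_list cs \<le> n} \<subseteq> {cs. set cs \<subseteq> {..n} \<and> length cs \<le> n}"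
    by (auto dest: member_le_sum_list intro: order_trans)
qed simp

lemma sum_list_12_eq_0: "set cs \<subseteq> {1, 2::nat} \<Longrightarrow> sum_list cs = 0 \<Longrightarrow> cs = []"
  by (cases cs) auto

lemma sum_list_pos: "\<forall>c\<in>set cs. 0 < c \<Longrightarrow> cs \<noteq> [] \<Longrightarrow> 0 < sum_list (cs :: nat list)"
  by (cases cs) auto

lemma sum_list_eq_1: "\<forall>c\<in>set cs. 0 < c \<Longrightarrow> sum_list (cs :: nat list) = 1 \<Longrightarrow> cs = [1]"
proof (cases cs)
  case (Cons x r)
  moreover assume "\<forall>c\<in>set cs. 0 < c" "sum_list cs = 1"
  ultimately show ?thesis using sum_list_pos[of r] by (cases "r = []") auto
qed simp

definition C12_plus :: "(nat list \<Rightarrow> nat) \<Rightarrow> nat \<Rightarrow> nat list set" where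
  "C12_plus f n = {cs. set cs \<subseteq> {1, 2} \<and> sum_list cs + f cs = n}"

lemma finite_C12_plus: "finite (C12_plus f n)"
  by (rule finite_subset[OF _ finite_compositions_le[of n]]) (auto simp: C12_plus_def)

lemma C12_plus_0:
  assumes "f [] = 0"
  shows "C12_plus f 0 = {[]}"
  using assms sum_list_12_eq_0 by (auto simp: C12_plus_def)

lemma d_eq_card: "d n = card (C12_plus water12 n)"
proof -
  have W_finite: "finite (W m k)" for m k
    by (rule finite_subset[OF _ finite_compositions_le[of m]]) (auto simp: W_def C12_def)
  have "C12_plus water12 n = (\<Union>k\<le>n. W (n - k) k)"
    by (auto simp: C12_plus_def W_def C12_def water_eq_water12)
  then have "card (C12_plus water12 n) = (\<Sum>k\<le>n. card (W (n - k) k))"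
    by (simp only:) (rule card_UN_disjoint, use W_finite in \<open>auto simp: W_def\<close>)
  then show ?thesis by (simp add: d_def w_def)
qed

lemma C12_plus_water12_Suc_Suc:
  "C12_plus water12 (Suc (Suc n)) = Cons 1 ` C12_plus water12 (Suc n) \<union> Cons 2 ` C12_plus covered_ones n"
proof -
  have "cs \<in> Cons 1 ` C12_plus water12 (Suc n) \<union> Cons 2 ` C12_plus covered_ones n"
    if "cs \<in> C12_plus water12 (Suc (Suc n))" for cs
    using that by (cases cs) (auto simp: C12_plus_def split: if_splits)
  then show ?thesis by (auto simp: C12_plus_def)
qed

lemma card_C12_plus_water12_Suc_Suc:
  "card (C12_plus water12 (Suc (Suc n))) = card (C12_plus water12 (Suc n)) + card (C12_plus covered_ones n)"
  unfolding C12_plus_water12_Suc_Suc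
  by (subst card_Un_disjoint) (auto simp: finite_C12_plus card_image)

lemma covered_ones_eq_0: "2 \<notin> set cs \<Longrightarrow> covered_ones cs = 0"
  by (induction cs) auto

lemma card_C12_plus_covered_ones_with_2:
  "card (C12_plus covered_ones n) = card {cs \<in> C12_plus covered_ones n. 2 \<in> set cs} + 1"
proof -
  let ?S = "{cs \<in> C12_plus covered_ones n. 2 \<in> set cs}"
  have "cs = replicate (sum_list cs) 1" if "set cs \<subseteq> {1, 2}" "2 \<notin> set cs" for cs :: "nat list"
    using that by (induction cs) auto
  then have "C12_plus covered_ones n = insert (replicate n 1) ?S"
    by (auto simp: C12_plus_def covered_ones_eq_0 sum_list_replicate) (metis covered_ones_eq_0 add_0_right)
  moreover have "card (insert (replicate n 1) ?S) = card ?S + 1"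
    using finite_C12_plus[of covered_ones n] by (simp add: card_insert_disjoint)
  ultimately show ?thesis by simp
qed

lemma C12_plus_covered_ones_with_2_Suc_Suc:
  "{cs \<in> C12_plus covered_ones (Suc (Suc n)). 2 \<in> set cs}
    = Cons 2 ` C12_plus covered_ones n \<union> Cons 1 ` {cs \<in> C12_plus covered_ones n. 2 \<in> set cs}"
proof -
  have "cs \<in> Cons 2 ` C12_plus covered_ones n \<union> Cons 1 ` {cs \<in> C12_plus covered_ones n. 2 \<in> set cs}"
    if "cs \<in> C12_plus covered_ones (Suc (Suc n))" "2 \<in> set cs" for cs
    using that by (cases cs) (auto simp: C12_plus_def covered_ones_eq_0 split: if_splits)
  then show ?thesis by (auto simp: C12_plus_def)
qed

lemma card_C12_plus_covered_ones_Suc_Suc: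
  "card (C12_plus covered_ones (Suc (Suc n))) = 2 * card (C12_plus covered_ones n)"
proof -
  have "card {cs \<in> C12_plus covered_ones (Suc (Suc n)). 2 \<in> set cs}
      = card (C12_plus covered_ones n) + card {cs \<in> C12_plus covered_ones n. 2 \<in> set cs}"
    unfolding C12_plus_covered_ones_with_2_Suc_Suc
    by (subst card_Un_disjoint) (auto simp: finite_C12_plus card_image)
  then show ?thesis
    using card_C12_plus_covered_ones_with_2[of n] card_C12_plus_covered_ones_with_2[of "Suc (Suc n)"]
    by simp
qed

lemma card_C12_plus_covered_ones: "card (C12_plus covered_ones n) = 2 ^ (n div 2)"
proof (induction n rule: nat_induct2)
  case 0
  then show ?case by (simp add: C12_plus_0)
next
  case 1
  have "C12_plus covered_ones 1 = {[1]}"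
  proof -
    have "cs = [1]" if "set cs \<subseteq> {1, 2}" "sum_list cs + covered_ones cs = 1" for cs
      using that sum_list_12_eq_0 by (cases cs) auto
    then show ?thesis by (auto simp: C12_plus_def)
  qed
  then show ?case by simp
next
  case (step n)
  then show ?case
    using card_C12_plus_covered_ones_Suc_Suc[of n] by simp
qed

fun dseq :: "nat \<Rightarrow> nat" where
  "dseq 0 = 1"
| "dseq (Suc 0) = 1"
| "dseq (Suc (Suc n)) = dseq (Suc n) + 2 ^ (n div 2)"

lemma d_eq_dseq: "d n = dseq n"
proof (induction n rule: dseq.induct)
  case 1
  show ?case by (simp add: d_eq_card C12_plus_0)
next
  case 2
  have "C12_plus water12 1 = {[1]}"
  proof -
    have "cs = [1]" if "set cs \<subseteq> {1, 2}" "sum_list cs + water12 cs = 1" for cs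
      using that sum_list_12_eq_0 by (cases cs) (auto split: if_splits)
    then show ?thesis by (auto simp: C12_plus_def)
  qed
  then show ?case by (simp add: d_eq_card)
next
  case (3 n)
  then show ?case
    by (simp add: d_eq_card card_C12_plus_water12_Suc_Suc card_C12_plus_covered_ones)
qed

definition even_init_comps :: "nat \<Rightarrow> nat list set" where
  "even_init_comps n =
    {cs. cs \<noteq> [] \<and> (\<forall>c\<in>set cs. 0 < c) \<and> sum_list cs = n \<and> (\<forall>c\<in>set (butlast cs). even c)}"

fun inc_hd :: "nat \<Rightarrow> nat list \<Rightarrow> nat list" where
  "inc_hd a [] = []"
| "inc_hd a (x # cs) = (x + a) # cs"

lemma inj_on_inc_hd: "[] \<notin> A \<Longrightarrow> inj_on (inc_hd a) A"
  by (rule inj_onI) (auto elim!: inc_hd.elims)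

lemma image_inc_hd: "[] \<notin> A \<Longrightarrow> inc_hd a ` A = {(y + a) # r | y r. y # r \<in> A}"
  by (auto simp: image_iff neq_Nil_conv) (metis inc_hd.simps(2) list.exhaust)+

lemma Cons_in_C_ie:
  "x # r \<in> C_ie n \<longleftrightarrow>
    0 < x \<and> (\<forall>c\<in>set r. 0 < c) \<and> x + sum_list r = n \<and> (\<forall>c\<in>set (butlast r). even c)"
proof -
  have "(\<forall>i. 0 < i \<and> i < length (x # r) - 1 \<longrightarrow> even ((x # r) ! i))
      \<longleftrightarrow> (\<forall>j. j < length r - 1 \<longrightarrow> even (r ! j))"
  proof (intro iffI allI impI)
    fix j assume "\<forall>i. 0 < i \<and> i < length (x # r) - 1 \<longrightarrow> even ((x # r) ! i)" "j < length r - 1"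
    then show "even (r ! j)" by (auto dest: spec[of _ "Suc j"])
  next
    fix i assume "\<forall>j. j < length r - 1 \<longrightarrow> even (r ! j)" "0 < i \<and> i < length (x # r) - 1"
    then show "even ((x # r) ! i)" by (cases i) auto
  qed
  also have "\<dots> \<longleftrightarrow> (\<forall>c\<in>set (butlast r). even c)"
    by (auto simp: all_set_conv_all_nth nth_butlast)
  finally show ?thesis by (auto simp: C_ie_def)
qed

lemma Cons_in_even_init_comps:
  "x # r \<in> even_init_comps n \<longleftrightarrow>
    0 < x \<and> (\<forall>c\<in>set r. 0 < c) \<and> x + sum_list r = n \<and> (r \<noteq> [] \<longrightarrow> even x) \<and> (\<forall>c\<in>set (butlast r). even c)"
  by (auto simp: even_init_comps_def)

lemma finite_C_ie: "finite (C_ie n)"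
  by (rule finite_subset[OF _ finite_compositions_le[of n]]) (auto simp: C_ie_def)

lemma finite_even_init_comps: "finite (even_init_comps n)"
  by (rule finite_subset[OF _ finite_compositions_le[of n]]) (auto simp: even_init_comps_def)

lemma C_ie_Suc:
  assumes "n \<ge> 1"
  shows "C_ie (Suc n) = Cons 1 ` even_init_comps n \<union> inc_hd 1 ` C_ie n"
proof (intro equalityI subsetI)
  fix cs assume cs: "cs \<in> C_ie (Suc n)"
  then obtain x r where xr: "cs = x # r"
    by (cases cs) (auto simp: C_ie_def)
  show "cs \<in> Cons 1 ` even_init_comps n \<union> inc_hd 1 ` C_ie n"
  proof (cases "x = 1")
    case True
    then have "r \<in> even_init_comps n"
      using cs xr assms by (auto simp: Cons_in_C_ie even_init_comps_def)
    then show ?thesis using xr True by blast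
  next
    case False
    then have "(x - 1) # r \<in> C_ie n" "cs = inc_hd 1 ((x - 1) # r)"
      using cs xr by (auto simp: Cons_in_C_ie)
    then show ?thesis by blast
  qed
next
  fix cs assume "cs \<in> Cons 1 ` even_init_comps n \<union> inc_hd 1 ` C_ie n"
  then show "cs \<in> C_ie (Suc n)"
  proof
    assume "cs \<in> Cons 1 ` even_init_comps n"
    then show ?thesis by (auto simp: Cons_in_C_ie even_init_comps_def)
  next
    assume "cs \<in> inc_hd 1 ` C_ie n"
    then show ?thesis
      using assms by (auto simp: image_inc_hd C_ie_def Cons_in_C_ie)
  qed
qed

lemma card_C_ie_Suc:
  assumes "n \<ge> 1"
  shows "card (C_ie (Suc n)) = card (even_init_comps n) + card (C_ie n)"
proof -
  have "[] \<notin> C_ie n" using assms by (simp add: C_ie_def)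
  moreover have "Cons 1 ` even_init_comps n \<inter> inc_hd 1 ` C_ie n = {}"
    using calculation by (auto simp: image_inc_hd Cons_in_C_ie)
  ultimately show ?thesis
    unfolding C_ie_Suc[OF assms]
    by (simp add: card_Un_disjoint finite_C_ie finite_even_init_comps card_image inj_on_inc_hd)
qed

lemma even_init_comps_Suc_Suc:
  assumes "n \<ge> 1"
  shows "even_init_comps (Suc (Suc n)) = Cons 2 ` even_init_comps n \<union> inc_hd 2 ` even_init_comps n"
proof (intro equalityI subsetI)
  fix cs assume cs: "cs \<in> even_init_comps (Suc (Suc n))"
  then obtain x r where xr: "cs = x # r"
    by (cases cs) (auto simp: even_init_comps_def)
  show "cs \<in> Cons 2 ` even_init_comps n \<union> inc_hd 2 ` even_init_comps n"
  proof (cases "x = 2 \<and> r \<noteq> []")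
    case True
    then have "r \<in> even_init_comps n"
      using cs xr by (auto simp: Cons_in_even_init_comps even_init_comps_def)
    then show ?thesis using xr True by blast
  next
    case False
    then have "x > 2"
      using cs xr assms by (auto simp: Cons_in_even_init_comps elim!: evenE)
    then have "(x - 2) # r \<in> even_init_comps n" "cs = inc_hd 2 ((x - 2) # r)"
      using cs xr by (auto simp: Cons_in_even_init_comps)
    then show ?thesis by blast
  qed
next
  fix cs assume "cs \<in> Cons 2 ` even_init_comps n \<union> inc_hd 2 ` even_init_comps n"
  then show "cs \<in> even_init_comps (Suc (Suc n))"
  proof
    assume "cs \<in> Cons 2 ` even_init_comps n"
    then show ?thesis by (auto simp: Cons_in_even_init_comps even_init_comps_def)
  next
    assume "cs \<in> inc_hd 2 ` even_init_comps n"
    then show ?thesis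
      by (auto simp: image_inc_hd even_init_comps_def Cons_in_even_init_comps split: if_splits intro: gr0I)
  qed
qed

lemma card_even_init_comps_Suc_Suc:
  assumes "n \<ge> 1"
  shows "card (even_init_comps (Suc (Suc n))) = 2 * card (even_init_comps n)"
proof -
  have "[] \<notin> even_init_comps n" by (simp add: even_init_comps_def)
  moreover have "Cons 2 ` even_init_comps n \<inter> inc_hd 2 ` even_init_comps n = {}"
    using calculation by (auto simp: image_inc_hd Cons_in_even_init_comps)
  ultimately show ?thesis
    unfolding even_init_comps_Suc_Suc[OF assms]
    by (simp add: card_Un_disjoint finite_even_init_comps card_image inj_on_inc_hd)
qed

lemma card_even_init_comps_Suc: "card (even_init_comps (Suc n)) = 2 ^ (n div 2)"
proof (induction n rule: nat_induct2)
  case 0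
  have "even_init_comps 1 = {[1]}"
    by (auto simp: even_init_comps_def dest: sum_list_eq_1)
  then show ?case by simp
next
  case 1
  have "x # r \<in> even_init_comps 2 \<longleftrightarrow> x = 2 \<and> r = []" for x r
  proof
    assume x_r: "x # r \<in> even_init_comps 2"
    have "r = []"
    proof (rule ccontr)
      assume "r \<noteq> []"
      with x_r have "even x" "0 < x" "0 < sum_list r" "x + sum_list r = 2"
        using sum_list_pos[of r] by (auto simp: Cons_in_even_init_comps)
      then show False by presburger
    qed
    with x_r show "x = 2 \<and> r = []" by (simp add: Cons_in_even_init_comps)
  qed (simp add: Cons_in_even_init_comps)
  then have "cs \<in> even_init_comps 2 \<longleftrightarrow> cs = [2]" for cs
    by (cases cs) (simp add: even_init_comps_def, simp)
  then have "even_init_comps 2 = {[2]}"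
    by blast
  then show ?case by (simp add: numeral_2_eq_2)
next
  case (step n)
  then show ?case
    using card_even_init_comps_Suc_Suc[of "Suc n"] by simp
qed

lemma c_ie_eq_dseq: "c_ie n = dseq n"
proof (induction n rule: dseq.induct)
  case 1
  have "cs = []" if "cs \<in> C_ie 0" for cs
    using that sum_list_pos[of cs] unfolding C_ie_def by force
  then have "C_ie 0 = {[]}"
    by (auto simp: C_ie_def)
  then show ?case by (simp add: c_ie_def)
next
  case 2
  have "C_ie 1 = {[1]}"
    by (auto simp: C_ie_def dest: sum_list_eq_1)
  then show ?case by (simp add: c_ie_def)
next
  case (3 n)
  then show ?case
    by (simp add: c_ie_def card_C_ie_Suc card_even_init_comps_Suc)
qed

lemma dseq_closed_form:
  "dseq (Suc (2 * j)) = 2 ^ Suc j - 1 \<and> dseq (Suc (Suc (2 * j))) = 3 * 2 ^ j - 1"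
proof (induction j)
  case (Suc j)
  have "(1::nat) \<le> 2 ^ j" by simp
  with Suc.IH show ?case by simp
qed simp

lemma fps_one_minus_X_times_dseq:
  "(1 - fps_X) * Abs_fps (\<lambda>n. of_nat (dseq n) :: 'a :: comm_ring_1)
    = 1 + fps_X ^ 2 * Abs_fps (\<lambda>n. 2 ^ (n div 2))"
proof (rule fps_ext)
  fix n
  show "fps_nth ((1 - fps_X) * Abs_fps (\<lambda>n. of_nat (dseq n) :: 'a)) n
      = fps_nth (1 + fps_X ^ 2 * Abs_fps (\<lambda>n. 2 ^ (n div 2))) n"
    by (cases n rule: dseq.cases) (simp_all add: algebra_simps fps_X_power_mult_nth)
qed

lemma fps_one_minus_2X2_times_half_powers:
  "(1 - 2 * fps_X ^ 2) * Abs_fps (\<lambda>n. 2 ^ (n div 2) :: 'a :: comm_ring_1) = 1 + fps_X"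
proof (rule fps_ext)
  fix n
  show "fps_nth ((1 - 2 * fps_X ^ 2) * Abs_fps (\<lambda>n. 2 ^ (n div 2) :: 'a)) n = fps_nth (1 + fps_X) n"
    by (cases n; cases "n - 1")
      (simp_all add: algebra_simps fps_X_power_mult_nth numeral_fps_const)
qed

lemma dseq_fps:
  "Abs_fps (\<lambda>n. of_nat (dseq n) :: 'a :: field)
    = (1 - fps_X ^ 2 + fps_X ^ 3) / (1 - fps_X - 2 * fps_X ^ 2 + 2 * fps_X ^ 3)"
proof -
  let ?A = "Abs_fps (\<lambda>n. of_nat (dseq n) :: 'a)"
  let ?B = "Abs_fps (\<lambda>n. 2 ^ (n div 2) :: 'a)"
  have "?A * (1 - fps_X - 2 * fps_X ^ 2 + 2 * fps_X ^ 3) = (1 - 2 * fps_X ^ 2) * ((1 - fps_X) * ?A)"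
    by (simp add: algebra_simps power2_eq_square power3_eq_cube)
  also have "\<dots> = (1 - 2 * fps_X ^ 2) + fps_X ^ 2 * ((1 - 2 * fps_X ^ 2) * ?B)"
    unfolding fps_one_minus_X_times_dseq by (simp add: algebra_simps)
  also have "\<dots> = 1 - fps_X ^ 2 + fps_X ^ 3"
    unfolding fps_one_minus_2X2_times_half_powers by (simp add: algebra_simps power2_eq_square power3_eq_cube)
  finally have eq: "?A * (1 - fps_X - 2 * fps_X ^ 2 + 2 * fps_X ^ 3) = 1 - fps_X ^ 2 + fps_X ^ 3" .
  have "fps_nth (1 - fps_X - 2 * fps_X ^ 2 + 2 * fps_X ^ 3 :: 'a fps) 0 = 1"
    by (simp add: numeral_fps_const fps_X_power_nth)
  then have "(1 - fps_X - 2 * fps_X ^ 2 + 2 * fps_X ^ 3 :: 'a fps) \<noteq> 0"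
    by (metis fps_zero_nth zero_neq_one)
  with eq show ?thesis
    by (metis fps_divide_times_eq)
qed

theorem theorem2p5:
  shows "(\<forall>n. d n = c_ie n)
    \<and> Abs_fps (\<lambda>n. of_nat (d n) :: rat)
        = (1 - fps_X ^ 2 + fps_X ^ 3) / (1 - fps_X - 2 * fps_X ^ 2 + 2 * fps_X ^ 3)
    \<and> (\<forall>m::nat. m \<ge> 1 \<longrightarrow> d (2 * m - 1) = 2 ^ m - 1)
    \<and> (\<forall>m::nat. m \<ge> 1 \<longrightarrow> d (2 * m) = 3 * 2 ^ (m - 1) - 1)"
proof (intro conjI allI impI)
  show "d n = c_ie n" for n
    by (simp add: d_eq_dseq c_ie_eq_dseq)
  show "Abs_fps (\<lambda>n. of_nat (d n) :: rat)
      = (1 - fps_X ^ 2 + fps_X ^ 3) / (1 - fps_X - 2 * fps_X ^ 2 + 2 * fps_X ^ 3)"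
    by (simp add: d_eq_dseq dseq_fps)
next
  fix m :: nat assume "m \<ge> 1"
  then obtain j where m: "m = Suc j" by (cases m) auto
  then show "d (2 * m - 1) = 2 ^ m - 1" and "d (2 * m) = 3 * 2 ^ (m - 1) - 1"
    using dseq_closed_form[of j] by (simp_all add: d_eq_dseq)
qed

end
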